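(* Let $K\ge 1$ and $M_\text{t}\ge 2$ be integers and let $P_\text{t}>0$, $P_\mathsf{max}>0$, $N_0>0$, $\tau>0$ and $\beta_1,\dots,\beta_K>0$. For a beacon power vector $\mathbf{p}=[p_1,\dots,p_K]^T$ with $0\le p_k\le P_\mathsf{max}$, define the harvested power of receiver $k$ by $$Q_k(\mathbf{p}) = P_\text{t}\beta_k + P_\text{t}\frac{p_k\beta_k^2(M_\text{t}-1)}{\sum_{l=1}^K p_l\beta_l + \frac{N_0}{\tau}},\qquad k=1,\dots,K,$$ and set $q_k(\mathbf{p}) = Q_k(\mathbf{p}) - P_\text{t}\beta_k$. Let targets $\bar Q_1,\dots,\bar Q_K$ satisfy $\bar Q_k\ge P_\text{t}\beta_k$ and put $\bar q_k=\bar Q_k-P_\text{t}\beta_k$. Starting from any initial vector $\mathbf{p}[1]$ with $0<p_k[1]\le P_\mathsf{max}$ for all $k$, consider the iteration $$p_k[n+1]=\min\left\{P_\mathsf{max},\ \frac{\bar q_k}{q_k(\mathbf{p}[n])}\,p_k[n]\right\},\qquad k=1,\dots,K,\ n\ge 1.$$ Then $\mathbf{p}[n]$ converges to a unique fixed-point solution $\mathbf{p}^\star=[p_1^\star,\dots,p_K^\star]^T$, such that every $k$ with $p_k^\star<P_\mathsf{max}$ satisfies $Q_k(\mathbf{p}^\star)=\bar Q_k$, and every $k$ with $p_k^\star=P_\mathsf{max}$ satisfies $Q_k(\mathbf{p}^\star)\le\bar Q_k$.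
   Context: Setting: an energy transmitter with $M_\text{t}$ antennas and total transmit power $P_\text{t}$ serves $K$ single-antenna energy receivers via retrodirective beamforming; receiver $k$ sends an uplink beacon of power $p_k\in[0,P_\mathsf{max}]$ for duration $\tau$, $N_0$ is the noise power spectral density, and $\beta_k$ is the large-scale channel attenuation of receiver $k$. The formula for $Q_k(\mathbf{p})$ above is the paper's (large-antenna) model of the power harvested by receiver $k$, and the iteration is the distributed beacon power update in which each receiver updates its beacon power once per block $n$. *)

theory Defs
  imports Complex_Main
begin

text \<open>Beacon power vectors are functions p :: nat => real, of which only the
components 1..K matter.\<close>

definition harvested :: "nat \<Rightarrow> nat \<Rightarrow> real \<Rightarrow> real \<Rightarrow> real \<Rightarrow> (nat \<Rightarrow> real)
    \<Rightarrow> (nat \<Rightarrow> real) \<Rightarrow> nat \<Rightarrow> real" where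
  "harvested K Mt Pt N0 tau beta p k =
     Pt * beta k + Pt * (p k * (beta k)^2 * (real Mt - 1))
                      / ((\<Sum>l=1..K. p l * beta l) + N0 / tau)"

definition excess :: "nat \<Rightarrow> nat \<Rightarrow> real \<Rightarrow> real \<Rightarrow> real \<Rightarrow> (nat \<Rightarrow> real)
    \<Rightarrow> (nat \<Rightarrow> real) \<Rightarrow> nat \<Rightarrow> real" where
  "excess K Mt Pt N0 tau beta p k = harvested K Mt Pt N0 tau beta p k - Pt * beta k"

text \<open>Fixed-point equation of the update, written via the (standard) interference
function q_bar_k * p_k / q_k(p) = q_bar_k (sum_l p_l beta_l + N0/tau) / (Pt beta_k^2 (Mt-1)),
which is the form of the update that is defined also at p_k = 0.\<close>

definition interf :: "nat \<Rightarrow> nat \<Rightarrow> real \<Rightarrow> real \<Rightarrow> real \<Rightarrow> (nat \<Rightarrow> real)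
    \<Rightarrow> (nat \<Rightarrow> real) \<Rightarrow> (nat \<Rightarrow> real) \<Rightarrow> nat \<Rightarrow> real" where
  "interf K Mt Pt N0 tau beta qbar p k =
     qbar k * ((\<Sum>l=1..K. p l * beta l) + N0 / tau) / (Pt * (beta k)^2 * (real Mt - 1))"

end

theory Submission
  imports Defs
begin

text \<open>Every iterate after the first is determined by the scalar
  s = sum_l p_l beta_l: on admissible vectors the update reads
  p_k := min Pmax (A_k (s + N0/tau)) with A_k = qbar_k / (Pt beta_k^2 (Mt - 1)).
  Hence s follows the scalar iteration s := G s with
  G s = sum_l min Pmax (A_l (s + c)) beta_l. The map G is monotone, so the orbit is
  monotone, and bounded, so it converges to a fixed point of G. It is also scalable,
  i.e. G s / (s + c) is non-increasing, which makes the non-negative fixed point of G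
  unique. Clipping at that fixed point gives the limit vector, and the statements
  about the harvested power unfold Q_k(p) = Qbar_k iff p_k = A_k (s + c).\<close>

lemma min_mult_cross_le:
  fixes P a u v :: real
  assumes "0 < u" "u \<le> v" "0 \<le> a" "0 \<le> P"
  shows "min P (a * v) * u \<le> min P (a * u) * v"
proof (cases "a * u \<le> P")
  case True
  then have "min P (a * u) * v = a * u * v" by simp
  moreover have "min P (a * v) * u \<le> a * v * u"
    using assms by (intro mult_right_mono) auto
  ultimately show ?thesis by (metis mult.commute mult.left_commute)
next
  case False
  then have "min P (a * u) * v = P * v" by simp
  moreover have "min P (a * v) * u \<le> P * u"
    using assms by (intro mult_right_mono) auto
  moreover have "P * u \<le> P * v"
    using assms by (intro mult_left_mono) auto
  ultimately show ?thesis by linarith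
qed

lemma monoseq_orbit:
  fixes f :: "'a::linorder \<Rightarrow> 'a"
  assumes "mono f" and orbit: "\<And>n. s (Suc n) = f (s n)"
  shows "monoseq s"
proof (cases "s 0 \<le> s 1")
  case True
  have "s n \<le> s (Suc n)" for n
    by (induction n) (use True orbit monoD[OF \<open>mono f\<close>] in auto)
  then show ?thesis unfolding monoseq_Suc by blast
next
  case False
  have "s (Suc n) \<le> s n" for n
    by (induction n) (use False orbit monoD[OF \<open>mono f\<close>] in auto)
  then show ?thesis unfolding monoseq_Suc by blast
qed

locale clipped_affine_sum =
  fixes I :: "'i set" and P c :: real and a w :: "'i \<Rightarrow> real"
  assumes P_nonneg: "0 \<le> P" and c_pos: "0 < c"
    and a_nonneg: "\<And>l. l \<in> I \<Longrightarrow> 0 \<le> a l"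
    and w_nonneg: "\<And>l. l \<in> I \<Longrightarrow> 0 \<le> w l"
begin

definition clip_sum :: "real \<Rightarrow> real" where
  "clip_sum s = (\<Sum>l\<in>I. min P (a l * (s + c)) * w l)"

lemma mono_clip_sum: "mono clip_sum"
  by (rule monoI) (auto simp: clip_sum_def a_nonneg w_nonneg
      intro!: sum_mono mult_right_mono min.mono mult_left_mono)

lemma isCont_clip_sum: "isCont clip_sum s"
  unfolding clip_sum_def[abs_def] by (intro continuous_intros)

lemma clip_sum_nonneg: "0 \<le> s \<Longrightarrow> 0 \<le> clip_sum s"
  unfolding clip_sum_def using P_nonneg c_pos a_nonneg w_nonneg
  by (intro sum_nonneg) simp

lemma clip_sum_le: "clip_sum s \<le> (\<Sum>l\<in>I. P * w l)"
  unfolding clip_sum_def using w_nonneg by (intro sum_mono mult_right_mono) auto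

lemma clip_sum_scalable:
  assumes "-c < x" "x \<le> y"
  shows "clip_sum y * (x + c) \<le> clip_sum x * (y + c)"
  unfolding clip_sum_def sum_distrib_right
proof (rule sum_mono)
  fix l assume "l \<in> I"
  have "min P (a l * (y + c)) * (x + c) \<le> min P (a l * (x + c)) * (y + c)"
    using assms P_nonneg a_nonneg[OF \<open>l \<in> I\<close>] by (intro min_mult_cross_le) auto
  from mult_right_mono[OF this w_nonneg[OF \<open>l \<in> I\<close>]]
  show "min P (a l * (y + c)) * w l * (x + c) \<le> min P (a l * (x + c)) * w l * (y + c)"
    by (simp add: algebra_simps)
qed

lemma fixed_point_le:
  assumes "0 \<le> x" "x \<le> y" "clip_sum x = x" "clip_sum y = y"
  shows "y \<le> x"
proof -
  have "y * (x + c) \<le> x * (y + c)"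
    using clip_sum_scalable[of x y] assms c_pos by simp
  then have "y * c \<le> x * c" by (simp add: algebra_simps)
  then show ?thesis using c_pos by simp
qed

lemma fixed_point_unique:
  assumes "0 \<le> x" "0 \<le> y" "clip_sum x = x" "clip_sum y = y"
  shows "x = y"
proof (cases "x \<le> y")
  case True
  with fixed_point_le[of x y] assms show ?thesis by simp
next
  case False
  with fixed_point_le[of y x] assms show ?thesis by simp
qed

lemma orbit_converges:
  assumes "0 \<le> s 0" and orbit: "\<And>n. s (Suc n) = clip_sum (s n)"
  shows "\<exists>L\<ge>0. clip_sum L = L \<and> s \<longlonglongrightarrow> L"
proof -
  have nonneg: "0 \<le> s n" for n
    by (induction n) (use assms clip_sum_nonneg in auto)
  have "s n \<le> max (s 0) (\<Sum>l\<in>I. P * w l)" for n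
  proof (cases n)
    case (Suc m)
    then show ?thesis using orbit[of m] clip_sum_le[of "s m"] by (simp add: le_max_iff_disj)
  qed simp
  then have "Bseq s"
    using nonneg by (intro BseqI'[where K = "max (s 0) (\<Sum>l\<in>I. P * w l)"]) auto
  moreover have "monoseq s"
    using monoseq_orbit[OF mono_clip_sum] orbit by blast
  ultimately obtain L where L: "s \<longlonglongrightarrow> L"
    using Bseq_monoseq_convergent unfolding convergent_def by blast
  have "(\<lambda>n. s (Suc n)) \<longlonglongrightarrow> clip_sum L"
    unfolding orbit by (rule isCont_tendsto_compose[OF isCont_clip_sum L])
  from LIMSEQ_unique[OF this LIMSEQ_Suc[OF L]] have "clip_sum L = L" .
  moreover have "0 \<le> L"
    using LIMSEQ_le_const[OF L] nonneg by blast
  ultimately show ?thesis using L by blast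
qed

definition fixpoint :: real where
  "fixpoint = (THE L. 0 \<le> L \<and> clip_sum L = L)"

lemma fixpoint: "0 \<le> fixpoint \<and> clip_sum fixpoint = fixpoint"
proof -
  obtain L where L: "0 \<le> L \<and> clip_sum L = L"
    using orbit_converges[of "\<lambda>n. (clip_sum ^^ n) 0"] by auto
  show ?thesis
    unfolding fixpoint_def
    by (rule theI[of "\<lambda>L. 0 \<le> L \<and> clip_sum L = L", OF L])
      (use L fixed_point_unique in blast)
qed

lemma fixpoint_unique: "0 \<le> x \<Longrightarrow> clip_sum x = x \<Longrightarrow> x = fixpoint"
  using fixed_point_unique fixpoint by blast

lemma orbit_tendsto_fixpoint:
  assumes "0 \<le> s 0" "\<And>n. s (Suc n) = clip_sum (s n)"
  shows "s \<longlonglongrightarrow> fixpoint"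
proof -
  obtain L where "0 \<le> L" "clip_sum L = L" "s \<longlonglongrightarrow> L"
    using orbit_converges[of s, OF assms] by blast
  then show ?thesis using fixpoint_unique by simp
qed

end

locale beacon_power_control =
  fixes K Mt :: nat and Pt Pmax N0 tau :: real and beta Qbar :: "nat \<Rightarrow> real"
  assumes Mt_ge: "2 \<le> Mt" and Pt_pos: "0 < Pt" and Pmax_pos: "0 < Pmax"
    and N0_pos: "0 < N0" and tau_pos: "0 < tau"
    and beta_pos: "\<And>k. k \<in> {1..K} \<Longrightarrow> 0 < beta k"
    and Qbar_ge: "\<And>k. k \<in> {1..K} \<Longrightarrow> Pt * beta k \<le> Qbar k"
begin

abbreviation Q :: "(nat \<Rightarrow> real) \<Rightarrow> nat \<Rightarrow> real" where
  "Q \<equiv> harvested K Mt Pt N0 tau beta"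

abbreviation q :: "(nat \<Rightarrow> real) \<Rightarrow> nat \<Rightarrow> real" where
  "q \<equiv> excess K Mt Pt N0 tau beta"

abbreviation qbar :: "nat \<Rightarrow> real" where
  "qbar \<equiv> \<lambda>k. Qbar k - Pt * beta k"

abbreviation noise :: real where
  "noise \<equiv> N0 / tau"

definition beacon_sum :: "(nat \<Rightarrow> real) \<Rightarrow> real" where
  "beacon_sum p = (\<Sum>l=1..K. p l * beta l)"

definition array_gain :: "nat \<Rightarrow> real" where
  "array_gain k = Pt * (beta k)\<^sup>2 * (real Mt - 1)"

definition slope :: "nat \<Rightarrow> real" where
  "slope k = qbar k / array_gain k"

definition response :: "real \<Rightarrow> nat \<Rightarrow> real" where
  "response s k = min Pmax (slope k * (s + noise))"

text \<open>At p_k = 0 the update qbar_k / q_k(p) * p_k evaluates to 0 (division by zero),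
  which agrees with the clipped affine response only if qbar_k = 0; hence the positivity
  requirement.\<close>

definition admissible :: "(nat \<Rightarrow> real) \<Rightarrow> bool" where
  "admissible p \<longleftrightarrow> (\<forall>k\<in>{1..K}. 0 \<le> p k \<and> p k \<le> Pmax \<and> (0 < qbar k \<longrightarrow> 0 < p k))"

lemma noise_pos: "0 < noise"
  using N0_pos tau_pos by simp

lemma array_gain_pos: "k \<in> {1..K} \<Longrightarrow> 0 < array_gain k"
  using Mt_ge Pt_pos beta_pos[of k] by (simp add: array_gain_def)

lemma slope_nonneg: "k \<in> {1..K} \<Longrightarrow> 0 \<le> slope k"
  using Qbar_ge[of k] array_gain_pos[of k] by (simp add: slope_def)

lemma slope_pos: "k \<in> {1..K} \<Longrightarrow> 0 < qbar k \<Longrightarrow> 0 < slope k"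
  using array_gain_pos by (simp add: slope_def)

lemma excess_eq: "q p k = array_gain k * p k / (beacon_sum p + noise)"
  by (simp add: excess_def harvested_def beacon_sum_def array_gain_def mult_ac)

lemma interf_eq: "interf K Mt Pt N0 tau beta qbar p k = slope k * (beacon_sum p + noise)"
  by (simp add: interf_def slope_def array_gain_def beacon_sum_def)

lemma beacon_sum_nonneg: "\<forall>k\<in>{1..K}. 0 \<le> p k \<Longrightarrow> 0 \<le> beacon_sum p"
  unfolding beacon_sum_def using beta_pos by (force intro: sum_nonneg)

lemma beacon_sum_pos: "\<forall>k\<in>{1..K}. 0 \<le> p k \<Longrightarrow> 0 < beacon_sum p + noise"
  using beacon_sum_nonneg noise_pos by (simp add: add_nonneg_pos)

lemma beacon_sum_cong: "\<forall>k\<in>{1..K}. p k = p' k \<Longrightarrow> beacon_sum p = beacon_sum p'"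
  unfolding beacon_sum_def by (rule sum.cong) auto

lemma update_eq:
  assumes "admissible p" "k \<in> {1..K}"
  shows "qbar k / q p k * p k = slope k * (beacon_sum p + noise)"
proof (cases "0 < p k")
  case True
  have "b / (a * x / d) * x = b / a * d" if "0 < x" "0 < a" "0 < d" for a b x d :: real
    using that by (simp add: field_simps)
  moreover have "0 < beacon_sum p + noise" "0 < array_gain k"
    using assms beacon_sum_pos array_gain_pos unfolding admissible_def by auto
  ultimately show ?thesis using True by (simp add: excess_eq slope_def)
next
  case False
  then have "qbar k = 0"
    using assms Qbar_ge[of k] unfolding admissible_def by force
  then show ?thesis by (simp add: slope_def)
qed

lemma update_response:
  assumes "admissible p" "k \<in> {1..K}"
  shows "min Pmax (qbar k / q p k * p k) = response (beacon_sum p) k"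
  by (simp only: update_eq[OF assms] response_def)

lemma response_admissible: "0 \<le> s \<Longrightarrow> admissible (response s)"
  unfolding admissible_def response_def
  using Pmax_pos noise_pos slope_nonneg slope_pos by (auto intro!: mult_pos_pos)

lemma harvested_eq:
  assumes "k \<in> {1..K}" "0 < beacon_sum p + noise"
  shows "Q p k = Qbar k + array_gain k * (p k - slope k * (beacon_sum p + noise))
                          / (beacon_sum p + noise)"
proof -
  have "a * (x - b / a * d) / d = a * x / d - b" if "a \<noteq> 0" "d \<noteq> 0" for a b x d :: real
    using that by (simp add: field_simps)
  then have "array_gain k * (p k - slope k * (beacon_sum p + noise)) / (beacon_sum p + noise)
      = array_gain k * p k / (beacon_sum p + noise) - qbar k"
    using assms array_gain_pos[OF assms(1)] unfolding slope_def by simp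
  moreover have "Q p k = Pt * beta k + array_gain k * p k / (beacon_sum p + noise)"
    using excess_eq[of p k] by (simp add: excess_def)
  ultimately show ?thesis by simp
qed

lemma harvested_eq_target_iff:
  assumes "k \<in> {1..K}" "0 < beacon_sum p + noise"
  shows "Q p k = Qbar k \<longleftrightarrow> p k = slope k * (beacon_sum p + noise)"
  using assms array_gain_pos[OF assms(1)] by (simp add: harvested_eq)

lemma harvested_le_target_iff:
  assumes "k \<in> {1..K}" "0 < beacon_sum p + noise"
  shows "Q p k \<le> Qbar k \<longleftrightarrow> p k \<le> slope k * (beacon_sum p + noise)"
  using assms array_gain_pos[OF assms(1)]
  by (simp add: harvested_eq divide_le_0_iff mult_le_0_iff)

sublocale clipped_affine_sum "{1..K}" Pmax noise slope beta
  using Pmax_pos noise_pos slope_nonneg beta_pos by unfold_locales (auto intro: less_imp_le)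

lemma beacon_sum_response: "beacon_sum (response s) = clip_sum s"
  by (simp only: beacon_sum_def response_def clip_sum_def)

definition p_star :: "nat \<Rightarrow> real" where
  "p_star = response fixpoint"

lemma p_star_admissible: "admissible p_star"
  using fixpoint response_admissible by (simp add: p_star_def)

lemma beacon_sum_p_star: "beacon_sum p_star = fixpoint"
  using fixpoint by (simp add: p_star_def beacon_sum_response)

lemma p_star_response: "p_star k = min Pmax (slope k * (beacon_sum p_star + noise))"
  unfolding beacon_sum_p_star by (simp add: p_star_def response_def)

lemma p_star_fixed_interf:
  "p_star k = min Pmax (interf K Mt Pt N0 tau beta qbar p_star k)"
  unfolding interf_eq by (rule p_star_response)

lemma p_star_fixed_update:
  assumes "k \<in> {1..K}"
  shows "p_star k = min Pmax (qbar k / q p_star k * p_star k)"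
  unfolding update_eq[OF p_star_admissible assms] by (rule p_star_response)

lemma p_star_unique:
  assumes nonneg: "\<forall>k\<in>{1..K}. 0 \<le> p k"
    and fixed: "\<forall>k\<in>{1..K}. p k = min Pmax (interf K Mt Pt N0 tau beta qbar p k)"
  shows "\<forall>k\<in>{1..K}. p k = p_star k"
proof -
  have p_response: "\<forall>k\<in>{1..K}. p k = response (beacon_sum p) k"
    using fixed by (simp add: interf_eq response_def)
  have "clip_sum (beacon_sum p) = beacon_sum p"
    unfolding beacon_sum_response[symmetric] by (rule beacon_sum_cong[OF p_response, symmetric])
  with beacon_sum_nonneg[OF nonneg] have "beacon_sum p = fixpoint"
    by (rule fixpoint_unique)
  with p_response show ?thesis unfolding p_star_def by simp
qed

lemma harvested_p_star_below_max:
  assumes "k \<in> {1..K}" "p_star k < Pmax"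
  shows "Q p_star k = Qbar k"
proof -
  have "p_star k = slope k * (beacon_sum p_star + noise)"
    using p_star_response[of k] assms(2) by (simp add: min_def split: if_splits)
  then show ?thesis
    using assms(1) p_star_admissible beacon_sum_pos harvested_eq_target_iff
    unfolding admissible_def by blast
qed

lemma harvested_p_star_le:
  assumes "k \<in> {1..K}"
  shows "Q p_star k \<le> Qbar k"
proof -
  have "p_star k \<le> slope k * (beacon_sum p_star + noise)"
    using p_star_response[of k] by simp
  then show ?thesis
    using assms p_star_admissible beacon_sum_pos harvested_le_target_iff
    unfolding admissible_def by blast
qed

lemma admissible_cong: "\<forall>k\<in>{1..K}. p k = p' k \<Longrightarrow> admissible p \<longleftrightarrow> admissible p'"
  unfolding admissible_def by auto

context
  fixes p :: "nat \<Rightarrow> nat \<Rightarrow> real"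
  assumes init: "\<forall>k\<in>{1..K}. 0 < p 1 k \<and> p 1 k \<le> Pmax"
    and iter: "\<forall>n\<ge>1. \<forall>k\<in>{1..K}. p (Suc n) k = min Pmax (qbar k / q (p n) k * p n k)"
begin

lemma iterate_response:
  assumes "1 \<le> n" "admissible (p n)"
  shows "\<forall>k\<in>{1..K}. p (Suc n) k = response (beacon_sum (p n)) k"
proof
  fix k assume k: "k \<in> {1..K}"
  have "p (Suc n) k = min Pmax (qbar k / q (p n) k * p n k)"
    using iter assms(1) k by blast
  also have "\<dots> = response (beacon_sum (p n)) k"
    by (rule update_response[OF assms(2) k])
  finally show "p (Suc n) k = response (beacon_sum (p n)) k" .
qed

lemma iterates_admissible: "1 \<le> n \<Longrightarrow> admissible (p n)"
proof (induction n rule: dec_induct)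
  case base
  show ?case using init by (auto simp: admissible_def)
next
  case (step n)
  have "admissible (response (beacon_sum (p n)))"
    using step.IH beacon_sum_nonneg response_admissible unfolding admissible_def by simp
  then show ?case
    using admissible_cong[OF iterate_response[OF step.hyps(1) step.IH]] by blast
qed

lemma iterates_tendsto_p_star:
  assumes "k \<in> {1..K}"
  shows "(\<lambda>n. p n k) \<longlonglongrightarrow> p_star k"
proof -
  define s where "s n = beacon_sum (p (Suc n))" for n
  have response_s: "\<forall>k\<in>{1..K}. p (Suc (Suc n)) k = response (s n) k" for n
    unfolding s_def by (rule iterate_response) (auto intro: iterates_admissible)
  have "s (Suc n) = clip_sum (s n)" for n
  proof -
    have "s (Suc n) = beacon_sum (response (s n))"
      unfolding s_def[of "Suc n"] by (rule beacon_sum_cong[OF response_s])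
    then show ?thesis by (simp only: beacon_sum_response)
  qed
  moreover have "0 \<le> s 0"
    using iterates_admissible[of 1] beacon_sum_nonneg unfolding s_def admissible_def by simp
  ultimately have "s \<longlonglongrightarrow> fixpoint"
    by (rule orbit_tendsto_fixpoint[rotated])
  then have "(\<lambda>n. response (s n) k) \<longlonglongrightarrow> p_star k"
    unfolding p_star_def response_def by (intro tendsto_intros)
  moreover have "(\<lambda>n. p (Suc (Suc n)) k) = (\<lambda>n. response (s n) k)"
    using response_s assms by blast
  ultimately have "(\<lambda>n. p (Suc (Suc n)) k) \<longlonglongrightarrow> p_star k"
    by simp
  then have "(\<lambda>n. p (Suc n) k) \<longlonglongrightarrow> p_star k"
    by (rule LIMSEQ_imp_Suc)
  then show ?thesis
    by (rule LIMSEQ_imp_Suc)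
qed

end

end

theorem theorem1:
  fixes K Mt :: nat and Pt Pmax N0 tau :: real
    and beta Qbar :: "nat \<Rightarrow> real" and p :: "nat \<Rightarrow> nat \<Rightarrow> real"
  assumes hK: "K \<ge> 1" and hM: "Mt \<ge> 2"
    and hPt: "Pt > 0" and hPmax: "Pmax > 0" and hN0: "N0 > 0" and htau: "tau > 0"
    and hbeta: "\<forall>k\<in>{1..K}. beta k > 0"
    and hQbar: "\<forall>k\<in>{1..K}. Qbar k \<ge> Pt * beta k"
    and hinit: "\<forall>k\<in>{1..K}. 0 < p 1 k \<and> p 1 k \<le> Pmax"
    and hiter: "\<forall>n\<ge>1. \<forall>k\<in>{1..K}. p (Suc n) k =
        min Pmax ((Qbar k - Pt * beta k) / excess K Mt Pt N0 tau beta (p n) k * p n k)"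
  shows "\<exists>pstar :: nat \<Rightarrow> real.
     (\<forall>k\<in>{1..K}. (\<lambda>n. p n k) \<longlonglongrightarrow> pstar k)
   \<and> (\<forall>k\<in>{1..K}. 0 \<le> pstar k \<and> pstar k \<le> Pmax)
   \<and> (\<forall>k\<in>{1..K}. pstar k =
        min Pmax ((Qbar k - Pt * beta k) / excess K Mt Pt N0 tau beta pstar k * pstar k))
   \<and> (\<forall>k\<in>{1..K}. pstar k =
        min Pmax (interf K Mt Pt N0 tau beta (\<lambda>j. Qbar j - Pt * beta j) pstar k))
   \<and> (\<forall>p'. (\<forall>k\<in>{1..K}. 0 \<le> p' k \<and> p' k \<le> Pmax) \<and>
          (\<forall>k\<in>{1..K}. p' k =
             min Pmax (interf K Mt Pt N0 tau beta (\<lambda>j. Qbar j - Pt * beta j) p' k))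
          \<longrightarrow> (\<forall>k\<in>{1..K}. p' k = pstar k))
   \<and> (\<forall>k\<in>{1..K}. pstar k < Pmax \<longrightarrow> harvested K Mt Pt N0 tau beta pstar k = Qbar k)
   \<and> (\<forall>k\<in>{1..K}. pstar k = Pmax \<longrightarrow> harvested K Mt Pt N0 tau beta pstar k \<le> Qbar k)"
proof -
  interpret beacon_power_control K Mt Pt Pmax N0 tau beta Qbar
    using assms by unfold_locales auto
  show ?thesis
  proof (intro exI[of _ p_star] conjI ballI allI impI)
    fix k assume k: "k \<in> {1..K}"
    show "(\<lambda>n. p n k) \<longlonglongrightarrow> p_star k"
      by (rule iterates_tendsto_p_star[OF hinit hiter k])
    show "0 \<le> p_star k" "p_star k \<le> Pmax"
      using p_star_admissible k unfolding admissible_def by auto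
    show "p_star k = min Pmax (qbar k / q p_star k * p_star k)"
      by (rule p_star_fixed_update[OF k])
    show "p_star k = min Pmax (interf K Mt Pt N0 tau beta qbar p_star k)"
      by (rule p_star_fixed_interf)
    show "Q p_star k = Qbar k" if "p_star k < Pmax"
      by (rule harvested_p_star_below_max[OF k that])
    show "Q p_star k \<le> Qbar k"
      by (rule harvested_p_star_le[OF k])
    show "p' k = p_star k"
      if "(\<forall>k\<in>{1..K}. 0 \<le> p' k \<and> p' k \<le> Pmax) \<and>
          (\<forall>k\<in>{1..K}. p' k = min Pmax (interf K Mt Pt N0 tau beta qbar p' k))" for p'
      using p_star_unique that k by blast
  qed
qed

end
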